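(* Over $\mathsf{RCA}_0$, the Additive Ramsey Theorem implies $\Sigma^0_2\text{-}\mathsf{IND}$.
   Context: $\mathsf{RCA}_0$: second-order arithmetic with $\Delta^0_1$-comprehension and $\Sigma^0_1$-induction. $\Sigma^0_2\text{-}\mathsf{IND}$: the induction scheme for $\Sigma^0_2$ formulae with parameters. Additive Ramsey Theorem: for every finite semigroup $(S,* )$ and every colouring $C:[\mathbb{N}]^2\to S$ such that $C(i,j)*C(j,k)=C(i,k)$ for all $i<j<k$, there is an infinite set $I\subseteq\mathbb{N}$ and $a\in S$ with $C(i,j)=a$ for all $i<j$ in $I$. *)

theory Defs
  imports Main
begin

datatype trm = Var nat | Zero | One | Plus trm trm | Times trm trm

text \<open>Formulas: first-order variables and second-order (set) variables are
 indexed by naturals in separate namespaces.\<close>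
datatype fm =
    Eq trm trm | Less trm trm | Mem trm nat
  | Neg fm | Conj fm fm | Disj fm fm | Imp fm fm
  | All nat fm | Ex nat fm
  | SAll nat fm | SEx nat fm

fun vars_trm :: "trm \<Rightarrow> nat set" where
  "vars_trm (Var x) = {x}"
| "vars_trm Zero = {}"
| "vars_trm One = {}"
| "vars_trm (Plus s t) = vars_trm s \<union> vars_trm t"
| "vars_trm (Times s t) = vars_trm s \<union> vars_trm t"

inductive bounded :: "fm \<Rightarrow> bool" where
  "bounded (Eq s t)"
| "bounded (Less s t)"
| "bounded (Mem t X)"
| "bounded p \<Longrightarrow> bounded (Neg p)"
| "bounded p \<Longrightarrow> bounded q \<Longrightarrow> bounded (Conj p q)"
| "bounded p \<Longrightarrow> bounded q \<Longrightarrow> bounded (Disj p q)"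
| "bounded p \<Longrightarrow> bounded q \<Longrightarrow> bounded (Imp p q)"
| "x \<notin> vars_trm t \<Longrightarrow> bounded p \<Longrightarrow> bounded (All x (Imp (Less (Var x) t) p))"
| "x \<notin> vars_trm t \<Longrightarrow> bounded p \<Longrightarrow> bounded (Ex x (Conj (Less (Var x) t) p))"

definition Sigma01 :: "fm \<Rightarrow> bool" where
  "Sigma01 p \<longleftrightarrow> (\<exists>x q. p = Ex x q \<and> bounded q)"

definition Pi01 :: "fm \<Rightarrow> bool" where
  "Pi01 p \<longleftrightarrow> (\<exists>x q. p = All x q \<and> bounded q)"

definition Sigma02 :: "fm \<Rightarrow> bool" where
  "Sigma02 p \<longleftrightarrow> (\<exists>x y q. p = Ex x (All y q) \<and> bounded q)"

section \<open>Structures (Henkin models) for L2\<close>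

text \<open>First-order universe: the whole type 'm; second-order universe:
 the family l2sets of subsets of 'm.\<close>
record 'm l2struct =
  zr :: 'm
  on :: 'm
  ad :: "'m \<Rightarrow> 'm \<Rightarrow> 'm"
  mu :: "'m \<Rightarrow> 'm \<Rightarrow> 'm"
  lt :: "'m \<Rightarrow> 'm \<Rightarrow> bool"
  l2sets :: "'m set set"

fun eval :: "'m l2struct \<Rightarrow> (nat \<Rightarrow> 'm) \<Rightarrow> trm \<Rightarrow> 'm" where
  "eval M e (Var x) = e x"
| "eval M e Zero = zr M"
| "eval M e One = on M"
| "eval M e (Plus s t) = ad M (eval M e s) (eval M e t)"
| "eval M e (Times s t) = mu M (eval M e s) (eval M e t)"

fun sat :: "'m l2struct \<Rightarrow> (nat \<Rightarrow> 'm) \<Rightarrow> (nat \<Rightarrow> 'm set) \<Rightarrow> fm \<Rightarrow> bool" where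
  "sat M e E (Eq s t) = (eval M e s = eval M e t)"
| "sat M e E (Less s t) = lt M (eval M e s) (eval M e t)"
| "sat M e E (Mem t X) = (eval M e t \<in> E X)"
| "sat M e E (Neg p) = (\<not> sat M e E p)"
| "sat M e E (Conj p q) = (sat M e E p \<and> sat M e E q)"
| "sat M e E (Disj p q) = (sat M e E p \<or> sat M e E q)"
| "sat M e E (Imp p q) = (sat M e E p \<longrightarrow> sat M e E q)"
| "sat M e E (All x p) = (\<forall>m. sat M (e(x := m)) E p)"
| "sat M e E (Ex x p) = (\<exists>m. sat M (e(x := m)) E p)"
| "sat M e E (SAll X p) = (\<forall>A\<in>l2sets M. sat M e (E(X := A)) p)"
| "sat M e E (SEx X p) = (\<exists>A\<in>l2sets M. sat M e (E(X := A)) p)"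

definition good_env :: "'m l2struct \<Rightarrow> (nat \<Rightarrow> 'm set) \<Rightarrow> bool" where
  "good_env M E \<longleftrightarrow> (\<forall>i. E i \<in> l2sets M)"

section \<open>Axioms of RCA_0 (Simpson, Def. I.2.4 and II.1)\<close>

definition basic_axioms :: "'m l2struct \<Rightarrow> bool" where
  "basic_axioms M \<longleftrightarrow>
     (\<forall>n. ad M n (on M) \<noteq> zr M) \<and>
     (\<forall>m n. ad M m (on M) = ad M n (on M) \<longrightarrow> m = n) \<and>
     (\<forall>m. ad M m (zr M) = m) \<and>
     (\<forall>m n. ad M m (ad M n (on M)) = ad M (ad M m n) (on M)) \<and>
     (\<forall>m. mu M m (zr M) = zr M) \<and>
     (\<forall>m n. mu M m (ad M n (on M)) = ad M (mu M m n) m) \<and>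
     (\<forall>m. \<not> lt M m (zr M)) \<and>
     (\<forall>m n. lt M m (ad M n (on M)) \<longleftrightarrow> (lt M m n \<or> m = n))"

definition IND :: "(fm \<Rightarrow> bool) \<Rightarrow> 'm l2struct \<Rightarrow> bool" where
  "IND C M \<longleftrightarrow>
     (\<forall>p x e E. C p \<longrightarrow> good_env M E \<longrightarrow>
        sat M (e(x := zr M)) E p \<longrightarrow>
        (\<forall>m. sat M (e(x := m)) E p \<longrightarrow> sat M (e(x := ad M m (on M))) E p) \<longrightarrow>
        (\<forall>m. sat M (e(x := m)) E p))"

definition Delta01_CA :: "'m l2struct \<Rightarrow> bool" where
  "Delta01_CA M \<longleftrightarrow>
     (\<forall>p q x e E. Sigma01 p \<longrightarrow> Pi01 q \<longrightarrow> good_env M E \<longrightarrow>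
        (\<forall>m. sat M (e(x := m)) E p \<longleftrightarrow> sat M (e(x := m)) E q) \<longrightarrow>
        (\<exists>A\<in>l2sets M. \<forall>m. m \<in> A \<longleftrightarrow> sat M (e(x := m)) E p))"

definition RCA0 :: "'m l2struct \<Rightarrow> bool" where
  "RCA0 M \<longleftrightarrow> basic_axioms M \<and> IND Sigma01 M \<and> Delta01_CA M"

definition pr :: "'m l2struct \<Rightarrow> 'm \<Rightarrow> 'm \<Rightarrow> 'm" where
  "pr M i j = ad M (mu M (ad M i j) (ad M i j)) i"

text \<open>F codes a function from D to Y: F is a subset of D x Y and is
 total and single-valued on D.\<close>
definition is_fun :: "'m l2struct \<Rightarrow> 'm set \<Rightarrow> 'm set \<Rightarrow> 'm set \<Rightarrow> bool" where
  "is_fun M D Y F \<longleftrightarrow>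
     (\<forall>k\<in>F. \<exists>i\<in>D. \<exists>y\<in>Y. k = pr M i y) \<and>
     (\<forall>i\<in>D. \<exists>y\<in>Y. pr M i y \<in> F) \<and>
     (\<forall>i\<in>D. \<forall>y y'. pr M i y \<in> F \<longrightarrow> pr M i y' \<in> F \<longrightarrow> y = y')"

definition model_finite :: "'m l2struct \<Rightarrow> 'm set \<Rightarrow> bool" where
  "model_finite M S \<longleftrightarrow> (\<exists>b. \<forall>s\<in>S. lt M s b)"

definition model_infinite :: "'m l2struct \<Rightarrow> 'm set \<Rightarrow> bool" where
  "model_infinite M I \<longleftrightarrow> (\<forall>n. \<exists>m\<in>I. lt M n m)"

text \<open>ART: for every finite semigroup (Sg, Op) and every additive colouring
 Cc : [N]^2 \<rightarrow> Sg there is an infinite I and a \<in> Sg with Cc(i,j) = a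
 for all i < j in I.\<close>
definition ART :: "'m l2struct \<Rightarrow> bool" where
  "ART M \<longleftrightarrow>
    (\<forall>Sg\<in>l2sets M. \<forall>Op\<in>l2sets M. \<forall>Cc\<in>l2sets M.
      let op = (\<lambda>a b c. pr M (pr M a b) c \<in> Op);
          col = (\<lambda>i j a. pr M (pr M i j) a \<in> Cc)
      in
      model_finite M Sg \<longrightarrow>
      is_fun M {pr M a b | a b. a \<in> Sg \<and> b \<in> Sg} Sg Op \<longrightarrow>
      (\<forall>a\<in>Sg. \<forall>b\<in>Sg. \<forall>c\<in>Sg. \<forall>d e f g.
          op a b d \<longrightarrow> op d c e \<longrightarrow> op b c f \<longrightarrow> op a f g \<longrightarrow> e = g) \<longrightarrow>
      is_fun M {pr M i j | i j. lt M i j} Sg Cc \<longrightarrow>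
      (\<forall>i j k a b c. lt M i j \<longrightarrow> lt M j k \<longrightarrow>
          col i j a \<longrightarrow> col j k b \<longrightarrow> col i k c \<longrightarrow> op a b c) \<longrightarrow>
      (\<exists>I\<in>l2sets M. model_infinite M I \<and>
          (\<exists>a\<in>Sg. \<forall>i\<in>I. \<forall>j\<in>I. lt M i j \<longrightarrow> col i j a)))"

end

theory Submission
  imports Defs
begin

text \<open>Let \<open>\<phi>(m) = \<exists>y \<forall>z \<theta>(m, y, z)\<close> with \<open>\<theta>\<close> bounded, and suppose \<open>\<phi>(0)\<close>,
  \<open>\<phi>(m) \<longrightarrow> \<phi>(m + 1)\<close> and \<open>\<not> \<phi>(c)\<close>. At stage \<open>s\<close> the guess for \<open>m\<close> is the least \<open>y \<le> s\<close> not yet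
  refuted by a \<open>z < s\<close>; \<open>\<phi>(m)\<close> holds iff the guess for \<open>m\<close> changes only finitely often.
  Colour a pair \<open>i < j\<close> by the least \<open>m < c\<close> whose guess changes at some stage in \<open>[i, j)\<close>, and by
  \<open>c\<close> if there is none. This colouring is \<open>\<Delta>\<^sup>0\<^sub>1\<close> and additive for the semigroup
  \<open>({0, \<dots>, c}, min)\<close>. On an infinite homogeneous set of colour \<open>a\<close> the guesses for every \<open>m < a\<close>
  eventually stop changing, while those for \<open>a\<close> change infinitely often if \<open>a < c\<close>; so \<open>\<phi>\<close> holds
  below \<open>a\<close> and fails at \<open>a\<close>, contradicting the induction hypotheses.\<close>

section \<open>Renaming and bounded quantifiers\<close>

fun rename_trm :: "(nat \<Rightarrow> nat) \<Rightarrow> trm \<Rightarrow> trm" where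
  "rename_trm f (Var x) = Var (f x)"
| "rename_trm f Zero = Zero"
| "rename_trm f One = One"
| "rename_trm f (Plus s t) = Plus (rename_trm f s) (rename_trm f t)"
| "rename_trm f (Times s t) = Times (rename_trm f s) (rename_trm f t)"

fun rename_fm :: "(nat \<Rightarrow> nat) \<Rightarrow> fm \<Rightarrow> fm" where
  "rename_fm f (Eq s t) = Eq (rename_trm f s) (rename_trm f t)"
| "rename_fm f (Less s t) = Less (rename_trm f s) (rename_trm f t)"
| "rename_fm f (Mem t X) = Mem (rename_trm f t) X"
| "rename_fm f (Neg p) = Neg (rename_fm f p)"
| "rename_fm f (Conj p q) = Conj (rename_fm f p) (rename_fm f q)"
| "rename_fm f (Disj p q) = Disj (rename_fm f p) (rename_fm f q)"
| "rename_fm f (Imp p q) = Imp (rename_fm f p) (rename_fm f q)"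
| "rename_fm f (All x p) = All (f x) (rename_fm f p)"
| "rename_fm f (Ex x p) = Ex (f x) (rename_fm f p)"
| "rename_fm f (SAll X p) = SAll X (rename_fm f p)"
| "rename_fm f (SEx X p) = SEx X (rename_fm f p)"

lemma eval_rename_trm: "eval M e (rename_trm f t) = eval M (e \<circ> f) t"
  by (induction t) auto

lemma vars_rename_trm: "vars_trm (rename_trm f t) = f ` vars_trm t"
  by (induction t) auto

lemma fun_upd_comp_inj: "inj f \<Longrightarrow> (e(f x := m)) \<circ> f = (e \<circ> f)(x := m)"
  by (auto simp: fun_eq_iff inj_eq)

lemma sat_rename_fm: "inj f \<Longrightarrow> sat M e E (rename_fm f p) \<longleftrightarrow> sat M (e \<circ> f) E p"
  by (induction p arbitrary: e E) (auto simp: eval_rename_trm fun_upd_comp_inj)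

lemma bounded_rename_fm:
  assumes "inj f" and "bounded p"
  shows "bounded (rename_fm f p)"
  using assms(2)
proof (induction rule: bounded.induct)
  case (8 x t p)
  then show ?case
    using bounded.intros(8)[of "f x" "rename_trm f t"] assms(1)
    by (simp add: vars_rename_trm inj_image_mem_iff)
next
  case (9 x t p)
  then show ?case
    using bounded.intros(9)[of "f x" "rename_trm f t"] assms(1)
    by (simp add: vars_rename_trm inj_image_mem_iff)
qed (auto intro: bounded.intros)

lemma eval_fun_upd_notin: "x \<notin> vars_trm t \<Longrightarrow> eval M (e(x := a)) t = eval M e t"
  by (induction t) auto

definition Ex_less :: "nat \<Rightarrow> trm \<Rightarrow> fm \<Rightarrow> fm" where
  "Ex_less x t p = Ex x (Conj (Less (Var x) t) p)"

definition All_less :: "nat \<Rightarrow> trm \<Rightarrow> fm \<Rightarrow> fm" where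
  "All_less x t p = All x (Imp (Less (Var x) t) p)"

definition Le :: "trm \<Rightarrow> trm \<Rightarrow> fm" where
  "Le s t = Disj (Less s t) (Eq s t)"

definition pair_trm :: "trm \<Rightarrow> trm \<Rightarrow> trm" where
  "pair_trm s t = Plus (Times (Plus s t) (Plus s t)) s"

lemma sat_Ex_less [simp]:
  "x \<notin> vars_trm t \<Longrightarrow>
    sat M e E (Ex_less x t p) \<longleftrightarrow> (\<exists>a. lt M a (eval M e t) \<and> sat M (e(x := a)) E p)"
  unfolding Ex_less_def by (simp add: eval_fun_upd_notin)

lemma sat_All_less [simp]:
  "x \<notin> vars_trm t \<Longrightarrow>
    sat M e E (All_less x t p) \<longleftrightarrow> (\<forall>a. lt M a (eval M e t) \<longrightarrow> sat M (e(x := a)) E p)"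
  unfolding All_less_def by (simp add: eval_fun_upd_notin)

lemma sat_Le [simp]: "sat M e E (Le s t) \<longleftrightarrow> lt M (eval M e s) (eval M e t) \<or> eval M e s = eval M e t"
  unfolding Le_def by simp

lemma eval_pair_trm [simp]: "eval M e (pair_trm s t) = pr M (eval M e s) (eval M e t)"
  unfolding pair_trm_def pr_def by simp

lemma vars_pair_trm [simp]: "vars_trm (pair_trm s t) = vars_trm s \<union> vars_trm t"
  unfolding pair_trm_def by auto

lemma bounded_Ex_less: "x \<notin> vars_trm t \<Longrightarrow> bounded p \<Longrightarrow> bounded (Ex_less x t p)"
  unfolding Ex_less_def by (rule bounded.intros)

lemma bounded_All_less: "x \<notin> vars_trm t \<Longrightarrow> bounded p \<Longrightarrow> bounded (All_less x t p)"
  unfolding All_less_def by (rule bounded.intros)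

lemma bounded_Le: "bounded (Le s t)"
  unfolding Le_def by (intro bounded.intros)

lemmas bounded_intros = bounded.intros(1-7) bounded_Ex_less bounded_All_less bounded_Le

section \<open>Arithmetic in models of \<open>RCA\<^sub>0\<close>\<close>

locale rca0_model =
  fixes M :: "'m l2struct" and E :: "nat \<Rightarrow> 'm set"
  assumes rca0: "RCA0 M" and good_env: "good_env M E"
begin

abbreviation "mzero \<equiv> zr M"
abbreviation "msuc n \<equiv> ad M n (on M)"
abbreviation "madd \<equiv> ad M"
abbreviation "mmult \<equiv> mu M"
abbreviation "mless \<equiv> lt M"
abbreviation "mle a b \<equiv> lt M a b \<or> a = b"

lemma
  msuc_neq_mzero: "msuc n \<noteq> mzero" and
  msuc_inject: "msuc m = msuc n \<longleftrightarrow> m = n" and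
  madd_mzero: "madd m mzero = m" and
  madd_msuc: "madd m (msuc n) = msuc (madd m n)" and
  mmult_mzero: "mmult m mzero = mzero" and
  mmult_msuc: "mmult m (msuc n) = madd (mmult m n) m" and
  not_mless_mzero: "\<not> mless m mzero" and
  mless_msuc_iff: "mless m (msuc n) \<longleftrightarrow> mless m n \<or> m = n"
  using rca0 unfolding RCA0_def basic_axioms_def by blast+

lemmas basic_simps = msuc_neq_mzero msuc_inject madd_mzero madd_msuc mmult_mzero mmult_msuc
  not_mless_mzero mless_msuc_iff

text \<open>Induction and comprehension are applied to \<open>Ex d r\<close> (and \<open>All d r\<close>) for a bounded \<open>r\<close>;
  in \<open>bounded_induct\<close> and \<open>bounded_comprehension\<close> the variable \<open>d\<close> is a dummy on which \<open>r\<close>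
  does not depend.\<close>

lemma sigma1_induct:
  assumes "bounded r"
    and "\<And>m. (\<exists>a. sat M (e(x := m, d := a)) E r) \<longleftrightarrow> P m"
    and "P mzero" and "\<And>m. P m \<Longrightarrow> P (msuc m)"
  shows "P n"
proof -
  have "Sigma01 (Ex d r)"
    using assms(1) unfolding Sigma01_def by blast
  with rca0 good_env assms(2-4) show ?thesis
    unfolding RCA0_def IND_def by (metis sat.simps(9))
qed

lemma bounded_induct:
  assumes "bounded r"
    and "\<And>m a. sat M (e(x := m, d := a)) E r \<longleftrightarrow> P m"
    and "P mzero" and "\<And>m. P m \<Longrightarrow> P (msuc m)"
  shows "P n"
  using sigma1_induct[OF assms(1), of e x d P] assms(2-4) by simp

lemma bounded_comprehension:
  assumes "bounded r" and "\<And>m a. sat M (e(x := m, d := a)) E r \<longleftrightarrow> P m"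
  shows "\<exists>A\<in>l2sets M. \<forall>m. m \<in> A \<longleftrightarrow> P m"
proof -
  have "Sigma01 (Ex d r)" "Pi01 (All d r)"
    using assms(1) unfolding Sigma01_def Pi01_def by blast+
  from rca0[unfolded RCA0_def Delta01_CA_def, THEN conjunct2, THEN conjunct2, rule_format,
      OF this good_env, of e x] assms(2)
  show ?thesis by simp
qed

lemma madd_mzero_left: "madd mzero n = n"
  by (rule bounded_induct[where r="Eq (Plus Zero (Var 0)) (Var 0)" and x=0 and d=1 and e="\<lambda>_. mzero"])
    (auto intro!: bounded_intros simp: basic_simps)

lemma madd_msuc_left: "madd (msuc m) n = msuc (madd m n)"
  by (rule bounded_induct[where r="Eq (Plus (Plus (Var 1) One) (Var 0)) (Plus (Plus (Var 1) (Var 0)) One)"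
        and x=0 and d=2 and e="(\<lambda>_. mzero)(1 := m)"])
    (auto intro!: bounded_intros simp: basic_simps)

lemma madd_commute: "madd m n = madd n m"
  by (rule bounded_induct[where r="Eq (Plus (Var 1) (Var 0)) (Plus (Var 0) (Var 1))"
        and x=0 and d=2 and e="(\<lambda>_. mzero)(1 := m)"])
    (auto intro!: bounded_intros simp: basic_simps madd_mzero_left madd_msuc_left)

lemma madd_assoc: "madd (madd a b) n = madd a (madd b n)"
  by (rule bounded_induct[where r="Eq (Plus (Plus (Var 1) (Var 2)) (Var 0)) (Plus (Var 1) (Plus (Var 2) (Var 0)))"
        and x=0 and d=3 and e="(\<lambda>_. mzero)(1 := a, 2 := b)"])
    (auto intro!: bounded_intros simp: basic_simps)

lemma madd_left_commute: "madd a (madd b c) = madd b (madd a c)"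
  by (metis madd_assoc madd_commute)

lemma madd_right_cancel: "madd a n = madd b n \<Longrightarrow> a = b"
  by (rule bounded_induct[where r="Imp (Eq (Plus (Var 1) (Var 0)) (Plus (Var 2) (Var 0))) (Eq (Var 1) (Var 2))"
        and x=0 and d=3 and e="(\<lambda>_. mzero)(1 := a, 2 := b)"
        and P="\<lambda>n. madd a n = madd b n \<longrightarrow> a = b", rule_format])
    (auto intro!: bounded_intros simp: basic_simps)

lemma madd_left_cancel: "madd n a = madd n b \<Longrightarrow> a = b"
  using madd_right_cancel madd_commute by metis

lemma mzero_or_msuc: "n = mzero \<or> (\<exists>p. n = msuc p)"
proof -
  have "n = mzero \<or> (\<exists>p. mless p n \<and> n = msuc p)"
    by (rule bounded_induct[where r="Disj (Eq (Var 0) Zero) (Ex_less 1 (Var 0) (Eq (Var 0) (Plus (Var 1) One)))"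
          and x=0 and d=2 and e="\<lambda>_. mzero"])
      (auto intro!: bounded_intros simp: basic_simps)
  then show ?thesis by blast
qed

lemma mless_msuc: "mless n (msuc n)"
  by (simp add: mless_msuc_iff)

lemma mless_trans: "mless a b \<Longrightarrow> mless b n \<Longrightarrow> mless a n"
  by (rule bounded_induct[where r="Imp (Less (Var 1) (Var 2)) (Imp (Less (Var 2) (Var 0)) (Less (Var 1) (Var 0)))"
        and x=0 and d=3 and e="(\<lambda>_. mzero)(1 := a, 2 := b)"
        and P="\<lambda>n. mless a b \<longrightarrow> mless b n \<longrightarrow> mless a n", rule_format])
    (auto intro!: bounded_intros simp: basic_simps)

lemma mless_irrefl: "\<not> mless n n"
proof (rule bounded_induct[where r="Neg (Less (Var 0) (Var 0))" and x=0 and d=1 and e="\<lambda>_. mzero"])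
  fix m assume IH: "\<not> mless m m"
  show "\<not> mless (msuc m) (msuc m)"
  proof
    assume "mless (msuc m) (msuc m)"
    then have "mless (msuc m) m \<or> msuc m = m" using mless_msuc_iff by blast
    then show False using mless_trans[OF mless_msuc[of m]] mless_msuc[of m] IH by metis
  qed
qed (auto intro!: bounded_intros simp: basic_simps)

lemma mzero_le: "mle mzero n"
  by (rule bounded_induct[where r="Le Zero (Var 0)" and x=0 and d=1 and e="\<lambda>_. mzero"])
    (auto intro!: bounded_intros simp: basic_simps)

lemma mless_imp_msuc_le: "mless n m \<Longrightarrow> mle (msuc n) m"
  by (rule bounded_induct[where r="Imp (Less (Var 1) (Var 0)) (Le (Plus (Var 1) One) (Var 0))"
        and x=0 and d=2 and e="(\<lambda>_. mzero)(1 := n)"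
        and P="\<lambda>m. mless n m \<longrightarrow> mle (msuc n) m", rule_format])
    (auto intro!: bounded_intros simp: basic_simps)

lemma mless_linear: "mless m n \<or> m = n \<or> mless n m"
  by (rule bounded_induct[where r="Disj (Less (Var 1) (Var 0)) (Disj (Eq (Var 1) (Var 0)) (Less (Var 0) (Var 1)))"
        and x=0 and d=2 and e="(\<lambda>_. mzero)(1 := m)"])
    (use mzero_le mless_imp_msuc_le in \<open>auto intro!: bounded_intros simp: basic_simps\<close>)

lemma mle_trans: "mle a b \<Longrightarrow> mle b c \<Longrightarrow> mle a c"
  using mless_trans by blast

lemma mle_mless_trans: "mle a b \<Longrightarrow> mless b c \<Longrightarrow> mless a c"
  using mless_trans by blast

lemma mless_mle_trans: "mless a b \<Longrightarrow> mle b c \<Longrightarrow> mless a c"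
  using mless_trans by blast

lemma not_mless: "\<not> mless a b \<longleftrightarrow> mle b a"
  using mless_linear mless_irrefl mless_trans by blast

lemma msuc_le_iff: "mle (msuc a) b \<longleftrightarrow> mless a b"
  using mless_imp_msuc_le mless_msuc mless_trans by blast

lemma mless_msuc_mono: "mless m n \<Longrightarrow> mless (msuc m) (msuc n)"
  using mless_imp_msuc_le mless_msuc_iff by blast

lemma mle_madd: "mle a (madd a n)"
  by (rule bounded_induct[where r="Le (Var 1) (Plus (Var 1) (Var 0))"
        and x=0 and d=2 and e="(\<lambda>_. mzero)(1 := a)"])
    (auto intro!: bounded_intros simp: basic_simps)

lemma mle_madd2: "mle a (madd n a)"
  using mle_madd madd_commute by metis

lemma madd_mless_mono: "mless a b \<Longrightarrow> mless (madd a n) (madd b n)"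
  by (rule bounded_induct[where r="Imp (Less (Var 1) (Var 2)) (Less (Plus (Var 1) (Var 0)) (Plus (Var 2) (Var 0)))"
        and x=0 and d=3 and e="(\<lambda>_. mzero)(1 := a, 2 := b)"
        and P="\<lambda>n. mless a b \<longrightarrow> mless (madd a n) (madd b n)", rule_format])
    (auto intro!: bounded_intros simp: madd_mzero madd_msuc mless_msuc_mono)

lemma madd_mle_mono2: "mle a b \<Longrightarrow> mle (madd n a) (madd n b)"
  using madd_mless_mono madd_commute by metis

lemma mmult_msuc_left: "mmult (msuc m) n = madd (mmult m n) n"
  by (rule bounded_induct[where r="Eq (Times (Plus (Var 1) One) (Var 0)) (Plus (Times (Var 1) (Var 0)) (Var 0))"
        and x=0 and d=2 and e="(\<lambda>_. mzero)(1 := m)"])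
    (auto intro!: bounded_intros simp: basic_simps madd_assoc madd_msuc_left madd_commute madd_left_commute)

lemma msquare_mono:
  assumes "mle a b"
  shows "mle (mmult a a) (mmult b b)"
proof -
  have "mle a n \<longrightarrow> mle (mmult a a) (mmult n n)" for n
  proof (rule bounded_induct[where r="Imp (Le (Var 1) (Var 0)) (Le (Times (Var 1) (Var 1)) (Times (Var 0) (Var 0)))"
        and x=0 and d=2 and e="(\<lambda>_. mzero)(1 := a)"
        and P="\<lambda>n. mle a n \<longrightarrow> mle (mmult a a) (mmult n n)"])
    fix n assume IH: "mle a n \<longrightarrow> mle (mmult a a) (mmult n n)"
    have "mle (mmult n n) (mmult (msuc n) (msuc n))"
      using mle_madd[of "mmult n n" "madd n (msuc n)"]
      by (simp add: mmult_msuc mmult_msuc_left madd_assoc)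
    then show "mle a (msuc n) \<longrightarrow> mle (mmult a a) (mmult (msuc n) (msuc n))"
      using IH mless_msuc_iff mle_trans by blast
  qed (auto intro!: bounded_intros simp: basic_simps)
  with assms show ?thesis by blast
qed

lemma mle_msquare: "mle s (mmult s s)"
proof (cases "s = mzero")
  case False
  then obtain p where "s = msuc p" using mzero_or_msuc by blast
  then show ?thesis using mle_madd2[of s "mmult s p"] by (simp add: mmult_msuc)
qed (simp add: mmult_mzero)

lemma mle_pr1: "mle i (pr M i j)"
  unfolding pr_def using mle_madd2 by blast

lemma mle_pr2: "mle j (pr M i j)"
  unfolding pr_def using mle_madd2[of j i] mle_msquare[of "madd i j"] mle_madd[of _ i] mle_trans
  by blast

lemma msquare_madd_mless:
  assumes "mle i s" and "mless s s'"
  shows "mless (madd (mmult s s) i) (madd (mmult s' s') i')"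
proof -
  have "mmult (msuc s) (msuc s) = msuc (madd (madd (mmult s s) s) s)"
    by (simp add: mmult_msuc mmult_msuc_left madd_msuc)
  then have "mless (madd (mmult s s) s) (mmult (msuc s) (msuc s))"
    using mle_mless_trans[OF mle_madd mless_msuc] by simp
  moreover have "mle (madd (mmult s s) i) (madd (mmult s s) s)"
    using madd_mle_mono2 assms(1) by blast
  moreover have "mle (mmult (msuc s) (msuc s)) (mmult s' s')"
    using msquare_mono mless_imp_msuc_le assms(2) by blast
  moreover have "mle (mmult s' s') (madd (mmult s' s') i')"
    by (rule mle_madd)
  ultimately show ?thesis
    using mle_mless_trans mless_mle_trans mle_trans by blast
qed

lemma pr_inject: "pr M i j = pr M i' j' \<Longrightarrow> i = i' \<and> j = j'"
proof -
  assume "pr M i j = pr M i' j'"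
  define s s' where "s = madd i j" and "s' = madd i' j'"
  have eq: "madd (mmult s s) i = madd (mmult s' s') i'"
    using \<open>pr M i j = pr M i' j'\<close> unfolding pr_def s_def s'_def .
  have "mle i s" "mle i' s'"
    unfolding s_def s'_def by (rule mle_madd)+
  then have "s = s'"
    using msquare_madd_mless[of i s s' i'] msquare_madd_mless[of i' s' s i] eq mless_irrefl
      mless_linear[of s s']
    by force
  then have "i = i'"
    using eq madd_left_cancel by blast
  with \<open>s = s'\<close> show ?thesis
    unfolding s_def s'_def using madd_left_cancel by blast
qed

definition mmin :: "'m \<Rightarrow> 'm \<Rightarrow> 'm" where
  "mmin a b = (if mless a b then a else b)"

lemma mmin_le1: "mle (mmin a b) a"
  unfolding mmin_def using not_mless by auto

lemma mmin_le2: "mle (mmin a b) b"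
  unfolding mmin_def by auto

lemma mmin_assoc: "mmin (mmin a b) c = mmin a (mmin b c)"
  unfolding mmin_def using mless_trans mless_irrefl mless_linear by (smt (verit))

section \<open>Coded ternary relations and the Additive Ramsey Theorem for \<open>min\<close>\<close>

lemma mle_pr_pr:
  "mle a (pr M (pr M a b) d) \<and> mle b (pr M (pr M a b) d) \<and> mle d (pr M (pr M a b) d)"
  using mle_trans mle_pr1 mle_pr2 by blast

definition codes_triples :: "'m set \<Rightarrow> ('m \<Rightarrow> 'm \<Rightarrow> 'm \<Rightarrow> bool) \<Rightarrow> bool" where
  "codes_triples A Q \<longleftrightarrow>
    (\<forall>a b d. pr M (pr M a b) d \<in> A \<longleftrightarrow> Q a b d) \<and> (\<forall>k\<in>A. \<exists>a b d. k = pr M (pr M a b) d)"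

lemma codes_triples_mem: "codes_triples A Q \<Longrightarrow> pr M (pr M a b) d \<in> A \<longleftrightarrow> Q a b d"
  unfolding codes_triples_def by blast

lemma codes_triples_elem:
  assumes "codes_triples A Q" and "k \<in> A"
  obtains a b d where "k = pr M (pr M a b) d" and "Q a b d"
  using assms codes_triples_mem unfolding codes_triples_def by metis

text \<open>Variables 0 to 5 are reserved by the construction: 0 ranges over codes, 2, 3, 4 over
  their components and 5 is the dummy.\<close>

lemma bounded_triple_comprehension:
  assumes "bounded r"
    and sat_r: "\<And>e'. \<forall>u>5. e' u = e u \<Longrightarrow> sat M e' E r \<longleftrightarrow> Q (e' 2) (e' 3) (e' 4)"
  shows "\<exists>A\<in>l2sets M. codes_triples A Q"
proof -
  let ?P = "\<lambda>k. \<exists>a b d. mless a (msuc k) \<and> mless b (msuc k) \<and> mless d (msuc k) \<and>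
    k = pr M (pr M a b) d \<and> Q a b d"
  have sat_upd: "sat M (e(0 := k, 5 := w, 2 := a, 3 := b, 4 := d)) E r \<longleftrightarrow> Q a b d" for k w a b d
    using sat_r[of "e(0 := k, 5 := w, 2 := a, 3 := b, 4 := d)"] by simp
  let ?r = "Ex_less 2 (Plus (Var 0) One) (Ex_less 3 (Plus (Var 0) One) (Ex_less 4 (Plus (Var 0) One)
    (Conj (Eq (Var 0) (pair_trm (pair_trm (Var 2) (Var 3)) (Var 4))) r)))"
  have "bounded ?r"
    by (intro bounded_intros assms(1); simp)
  moreover have "sat M (e(0 := k, 5 := w)) E ?r \<longleftrightarrow> ?P k" for k w
    by (simp add: sat_upd)
  ultimately have "\<exists>A\<in>l2sets M. \<forall>k. k \<in> A \<longleftrightarrow> ?P k"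
    by (rule bounded_comprehension[where d=5 and x=0 and e=e and P="?P"])
  then obtain A where "A \<in> l2sets M" and A: "\<And>k. k \<in> A \<longleftrightarrow> ?P k"
    by blast
  have "pr M (pr M a b) d \<in> A \<longleftrightarrow> Q a b d" for a b d
  proof
    assume "pr M (pr M a b) d \<in> A"
    then obtain a' b' d' where "pr M (pr M a b) d = pr M (pr M a' b') d'" "Q a' b' d'"
      unfolding A by blast
    then show "Q a b d"
      by (auto dest!: pr_inject)
  next
    assume "Q a b d"
    moreover have "mless a (msuc (pr M (pr M a b) d))" "mless b (msuc (pr M (pr M a b) d))"
      "mless d (msuc (pr M (pr M a b) d))"
      using mle_pr_pr[of a b d] by (simp_all add: mless_msuc_iff)
    ultimately show "pr M (pr M a b) d \<in> A"
      unfolding A by blast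
  qed
  moreover have "\<exists>a b d. k = pr M (pr M a b) d" if "k \<in> A" for k
    using that unfolding A by blast
  ultimately show ?thesis
    using \<open>A \<in> l2sets M\<close> unfolding codes_triples_def by (intro bexI[of _ A]) simp_all
qed

lemma is_fun_codes_triples:
  assumes "codes_triples F Q"
    and Q_dom: "\<And>a b d. Q a b d \<Longrightarrow> R a b \<and> d \<in> Y"
    and Q_total: "\<And>a b. R a b \<Longrightarrow> \<exists>d. Q a b d"
    and Q_unique: "\<And>a b d d'. Q a b d \<Longrightarrow> Q a b d' \<Longrightarrow> d = d'"
  shows "is_fun M {pr M a b | a b. R a b} Y F"
  unfolding is_fun_def
proof (intro conjI ballI allI impI)
  fix k assume "k \<in> F"
  with assms(1) obtain a b d where "k = pr M (pr M a b) d" "Q a b d"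
    by (rule codes_triples_elem)
  moreover from this have "pr M a b \<in> {pr M a b | a b. R a b}" "d \<in> Y"
    using Q_dom by blast+
  ultimately show "\<exists>i\<in>{pr M a b | a b. R a b}. \<exists>y\<in>Y. k = pr M i y"
    by blast
next
  fix i assume "i \<in> {pr M a b | a b. R a b}"
  then obtain a b where "i = pr M a b" "R a b"
    by blast
  moreover from this obtain d where "Q a b d"
    using Q_total by blast
  ultimately show "\<exists>y\<in>Y. pr M i y \<in> F"
    using Q_dom codes_triples_mem[OF assms(1)] by auto
next
  fix i y y' assume "i \<in> {pr M a b | a b. R a b}" "pr M i y \<in> F" "pr M i y' \<in> F"
  then show "y = y'"
    using Q_unique codes_triples_mem[OF assms(1)] by auto
qed

lemma min_semigroup_code:
  obtains S Op where "S \<in> l2sets M" "Op \<in> l2sets M" "\<And>a. a \<in> S \<longleftrightarrow> mle a c"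
    "codes_triples Op (\<lambda>a b d. mle a c \<and> mle b c \<and> d = mmin a b)"
proof -
  have "\<exists>S\<in>l2sets M. \<forall>a. a \<in> S \<longleftrightarrow> mle a c"
    by (rule bounded_comprehension[where r="Le (Var 0) (Var 1)" and x=0 and d=2 and e="(\<lambda>_. c)"])
      (auto intro: bounded_intros)
  moreover have "\<exists>Op\<in>l2sets M. codes_triples Op (\<lambda>a b d. mle a c \<and> mle b c \<and> d = mmin a b)"
    by (rule bounded_triple_comprehension[where e="\<lambda>_. c" and
          r="Conj (Le (Var 2) (Var 6)) (Conj (Le (Var 3) (Var 6))
               (Disj (Conj (Less (Var 2) (Var 3)) (Eq (Var 4) (Var 2)))
                 (Conj (Neg (Less (Var 2) (Var 3))) (Eq (Var 4) (Var 3)))))"])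
      (auto intro!: bounded_intros simp: mmin_def)
  ultimately show thesis
    using that by blast
qed

lemma ART_min_colouring:
  assumes art: "ART M"
    and "Cc \<in> l2sets M" and Cc: "codes_triples Cc col"
    and col_dom: "\<And>i j a. col i j a \<Longrightarrow> mless i j \<and> mle a c"
    and col_exists: "\<And>i j. mless i j \<Longrightarrow> \<exists>a. col i j a"
    and col_unique: "\<And>i j a b. col i j a \<Longrightarrow> col i j b \<Longrightarrow> a = b"
    and col_additive: "\<And>i j k a b. col i j a \<Longrightarrow> col j k b \<Longrightarrow> col i k (mmin a b)"
  shows "\<exists>I a. model_infinite M I \<and> mle a c \<and> (\<forall>i\<in>I. \<forall>j\<in>I. mless i j \<longrightarrow> col i j a)"
proof -
  obtain S Op where "S \<in> l2sets M" "Op \<in> l2sets M" and S: "\<And>a. a \<in> S \<longleftrightarrow> mle a c"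
    and Op: "codes_triples Op (\<lambda>a b d. mle a c \<and> mle b c \<and> d = mmin a b)"
    using min_semigroup_code[of c] by blast
  note Op_code = codes_triples_mem[OF Op] and Cc_code = codes_triples_mem[OF Cc]
  have "model_finite M S"
    unfolding model_finite_def by (intro exI[of _ "msuc c"]) (simp add: S mless_msuc_iff)
  moreover have "is_fun M {pr M a b | a b. a \<in> S \<and> b \<in> S} S Op"
  proof (rule is_fun_codes_triples[OF Op])
    show "mle a c \<and> mle b c \<and> d = mmin a b \<Longrightarrow> (a \<in> S \<and> b \<in> S) \<and> d \<in> S" for a b d
      unfolding S using mle_trans[OF mmin_le1] by blast
  qed (auto simp: S)
  moreover have "\<forall>a\<in>S. \<forall>b\<in>S. \<forall>c\<in>S. \<forall>d e f g.
      pr M (pr M a b) d \<in> Op \<longrightarrow> pr M (pr M d c) e \<in> Op \<longrightarrow>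
      pr M (pr M b c) f \<in> Op \<longrightarrow> pr M (pr M a f) g \<in> Op \<longrightarrow> e = g"
    by (simp add: Op_code mmin_assoc)
  moreover have "is_fun M {pr M i j | i j. mless i j} S Cc"
    using Cc by (rule is_fun_codes_triples) (use col_dom col_exists col_unique in \<open>auto simp: S\<close>)
  moreover have "\<forall>i j k a b d. mless i j \<longrightarrow> mless j k \<longrightarrow> pr M (pr M i j) a \<in> Cc \<longrightarrow>
      pr M (pr M j k) b \<in> Cc \<longrightarrow> pr M (pr M i k) d \<in> Cc \<longrightarrow> pr M (pr M a b) d \<in> Op"
    using col_dom col_unique col_additive by (simp add: Cc_code Op_code)
  ultimately have "\<exists>I\<in>l2sets M. model_infinite M I \<and>
      (\<exists>a\<in>S. \<forall>i\<in>I. \<forall>j\<in>I. mless i j \<longrightarrow> pr M (pr M i j) a \<in> Cc)"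
    using art[unfolded ART_def Let_def, rule_format, OF \<open>S \<in> l2sets M\<close> \<open>Op \<in> l2sets M\<close>
        \<open>Cc \<in> l2sets M\<close>]
    by blast
  then obtain I a where "model_infinite M I" "a \<in> S"
    and "\<forall>i\<in>I. \<forall>j\<in>I. mless i j \<longrightarrow> pr M (pr M i j) a \<in> Cc"
    by blast
  then show ?thesis
    by (intro exI[of _ I] exI[of _ a]) (simp add: S Cc_code)
qed

end

section \<open>Approximating a \<open>\<Sigma>\<^sup>0\<^sub>2\<close> formula\<close>

abbreviation param_shift :: nat where
  "param_shift \<equiv> 1000"

definition local_vars :: "nat list \<Rightarrow> bool" where
  "local_vars vs \<longleftrightarrow> distinct vs \<and> (\<forall>u\<in>set vs. u < param_shift)"

locale sigma2_instance = rca0_model M E for M :: "'m l2struct" and E +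
  fixes e0 :: "nat \<Rightarrow> 'm" and vx vy vz :: nat and q :: fm
  assumes bounded_q: "bounded q"
begin

definition theta :: "'m \<Rightarrow> 'm \<Rightarrow> 'm \<Rightarrow> bool" where
  "theta m y z \<longleftrightarrow> sat M (e0(vx := m, vy := y, vz := z)) E q"

abbreviation phi :: "'m \<Rightarrow> bool" where
  "phi m \<equiv> \<exists>y. \<forall>z. theta m y z"

definition agrees_on_params :: "(nat \<Rightarrow> 'm) \<Rightarrow> bool" where
  "agrees_on_params e \<longleftrightarrow> (\<forall>u. e (u + param_shift) = e0 u)"

definition param_env :: "nat \<Rightarrow> 'm" where
  "param_env u = e0 (u - param_shift)"

lemma agrees_on_params_param_env [simp]: "agrees_on_params param_env"
  unfolding agrees_on_params_def param_env_def by simp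

lemma agrees_on_params_fun_upd [simp]:
  "agrees_on_params e \<Longrightarrow> u < param_shift \<Longrightarrow> agrees_on_params (e(u := a))"
  unfolding agrees_on_params_def by auto

text \<open>\<open>theta_fm a b c\<close> is \<open>q\<close> with \<open>vx, vy, vz\<close> moved to the local variables
  \<open>a, b, c\<close> and all other variables of \<open>q\<close> (its parameters) shifted by \<open>param_shift\<close>.\<close>

definition theta_renaming :: "nat \<Rightarrow> nat \<Rightarrow> nat \<Rightarrow> nat \<Rightarrow> nat" where
  "theta_renaming a b c u =
    (if u = vz then c else if u = vy then b else if u = vx then a else u + param_shift)"

definition theta_fm :: "nat \<Rightarrow> nat \<Rightarrow> nat \<Rightarrow> fm" where
  "theta_fm a b c = rename_fm (theta_renaming a b c) q"

lemma inj_theta_renaming: "local_vars [a, b, c] \<Longrightarrow> inj (theta_renaming a b c)"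
  unfolding inj_def theta_renaming_def local_vars_def by auto

lemma sat_theta_fm [simp]:
  assumes "agrees_on_params e" and "local_vars [a, b, c]"
  shows "sat M e E (theta_fm a b c) \<longleftrightarrow> theta (e a) (e b) (e c)"
proof -
  have "e \<circ> theta_renaming a b c = e0(vx := e a, vy := e b, vz := e c)"
    using assms unfolding agrees_on_params_def theta_renaming_def by (auto simp: fun_eq_iff)
  then show ?thesis
    unfolding theta_fm_def theta_def by (simp add: sat_rename_fm[OF inj_theta_renaming[OF assms(2)]])
qed

lemma bounded_theta_fm: "local_vars [a, b, c] \<Longrightarrow> bounded (theta_fm a b c)"
  unfolding theta_fm_def by (rule bounded_rename_fm[OF inj_theta_renaming bounded_q])

definition refuted :: "'m \<Rightarrow> 'm \<Rightarrow> 'm \<Rightarrow> bool" where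
  "refuted m y s \<longleftrightarrow> (\<exists>z. mless z s \<and> \<not> theta m y z)"

definition guess :: "'m \<Rightarrow> 'm \<Rightarrow> 'm \<Rightarrow> bool" where
  "guess m s g \<longleftrightarrow> mle g s \<and> (g = s \<or> \<not> refuted m g s) \<and> (\<forall>y. mless y g \<longrightarrow> refuted m y s)"

definition changes :: "'m \<Rightarrow> 'm \<Rightarrow> bool" where
  "changes m s \<longleftrightarrow> (\<exists>g. mless g (msuc s) \<and> guess m s g \<and> \<not> guess m (msuc s) g)"

definition changes_below :: "'m \<Rightarrow> 'm \<Rightarrow> bool" where
  "changes_below s a \<longleftrightarrow> (\<exists>m. mless m a \<and> changes m s)"

definition first_change :: "'m \<Rightarrow> 'm \<Rightarrow> 'm \<Rightarrow> bool" where
  "first_change c s a \<longleftrightarrow>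
    (mless a c \<and> changes a s \<and> \<not> changes_below s a) \<or> (a = c \<and> \<not> changes_below s c)"

definition colour :: "'m \<Rightarrow> 'm \<Rightarrow> 'm \<Rightarrow> 'm \<Rightarrow> bool" where
  "colour c i j a \<longleftrightarrow> mless i j \<and> mle a c \<and>
    (\<exists>s. mless s j \<and> mle i s \<and> first_change c s a) \<and>
    (\<forall>s. mless s j \<longrightarrow> mle i s \<longrightarrow> \<not> changes_below s a)"

definition refuted_fm :: "nat \<Rightarrow> nat \<Rightarrow> trm \<Rightarrow> nat \<Rightarrow> fm" where
  "refuted_fm m y t z = Ex_less z t (Neg (theta_fm m y z))"

definition guess_fm :: "nat \<Rightarrow> trm \<Rightarrow> nat \<Rightarrow> nat \<Rightarrow> nat \<Rightarrow> fm" where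
  "guess_fm m t g y z =
    Conj (Le (Var g) t)
      (Conj (Disj (Eq (Var g) t) (Neg (refuted_fm m g t z))) (All_less y (Var g) (refuted_fm m y t z)))"

definition changes_fm :: "nat \<Rightarrow> nat \<Rightarrow> nat \<Rightarrow> nat \<Rightarrow> nat \<Rightarrow> fm" where
  "changes_fm m s g y z =
    Ex_less g (Plus (Var s) One) (Conj (guess_fm m (Var s) g y z) (Neg (guess_fm m (Plus (Var s) One) g y z)))"

definition changes_below_fm :: "nat \<Rightarrow> nat \<Rightarrow> nat \<Rightarrow> nat \<Rightarrow> nat \<Rightarrow> nat \<Rightarrow> fm" where
  "changes_below_fm s a m g y z = Ex_less m (Var a) (changes_fm m s g y z)"

definition first_change_fm :: "nat \<Rightarrow> nat \<Rightarrow> nat \<Rightarrow> nat \<Rightarrow> nat \<Rightarrow> nat \<Rightarrow> nat \<Rightarrow> fm" where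
  "first_change_fm c s a m g y z =
    Disj (Conj (Less (Var a) (Var c)) (Conj (changes_fm a s g y z) (Neg (changes_below_fm s a m g y z))))
      (Conj (Eq (Var a) (Var c)) (Neg (changes_below_fm s c m g y z)))"

definition colour_fm :: "nat \<Rightarrow> nat \<Rightarrow> nat \<Rightarrow> nat \<Rightarrow> nat \<Rightarrow> nat \<Rightarrow> nat \<Rightarrow> nat \<Rightarrow> nat \<Rightarrow> fm" where
  "colour_fm c i j a s m g y z =
    Conj (Less (Var i) (Var j)) (Conj (Le (Var a) (Var c))
      (Conj (Ex_less s (Var j) (Conj (Le (Var i) (Var s)) (first_change_fm c s a m g y z)))
        (All_less s (Var j) (Imp (Le (Var i) (Var s)) (Neg (changes_below_fm s a m g y z))))))"

lemma sat_refuted_fm [simp]: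
  "agrees_on_params e \<Longrightarrow> local_vars [m, y, z] \<Longrightarrow> z \<notin> vars_trm t \<Longrightarrow>
    sat M e E (refuted_fm m y t z) \<longleftrightarrow> refuted (e m) (e y) (eval M e t)"
  unfolding refuted_fm_def refuted_def by (simp add: local_vars_def eq_commute)

lemma sat_guess_fm [simp]:
  "agrees_on_params e \<Longrightarrow> local_vars [m, g, y, z] \<Longrightarrow> y \<notin> vars_trm t \<Longrightarrow> z \<notin> vars_trm t \<Longrightarrow>
    sat M e E (guess_fm m t g y z) \<longleftrightarrow> guess (e m) (eval M e t) (e g)"
  unfolding guess_fm_def guess_def by (simp add: local_vars_def eq_commute eval_fun_upd_notin)

lemma sat_changes_fm [simp]:
  "agrees_on_params e \<Longrightarrow> local_vars [m, s, g, y, z] \<Longrightarrow>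
    sat M e E (changes_fm m s g y z) \<longleftrightarrow> changes (e m) (e s)"
  unfolding changes_fm_def changes_def by (simp add: local_vars_def eq_commute)

lemma sat_changes_below_fm [simp]:
  "agrees_on_params e \<Longrightarrow> local_vars [s, a, m, g, y, z] \<Longrightarrow>
    sat M e E (changes_below_fm s a m g y z) \<longleftrightarrow> changes_below (e s) (e a)"
  unfolding changes_below_fm_def changes_below_def by (simp add: local_vars_def eq_commute)

lemma sat_first_change_fm [simp]:
  "agrees_on_params e \<Longrightarrow> local_vars [c, s, a, m, g, y, z] \<Longrightarrow>
    sat M e E (first_change_fm c s a m g y z) \<longleftrightarrow> first_change (e c) (e s) (e a)"
  unfolding first_change_fm_def first_change_def by (simp add: local_vars_def eq_commute)

lemma sat_colour_fm [simp]:
  "agrees_on_params e \<Longrightarrow> local_vars [c, i, j, a, s, m, g, y, z] \<Longrightarrow>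
    sat M e E (colour_fm c i j a s m g y z) \<longleftrightarrow> colour (e c) (e i) (e j) (e a)"
  unfolding colour_fm_def colour_def by (simp add: local_vars_def eq_commute)

lemma bounded_refuted_fm:
  "local_vars [m, y, z] \<Longrightarrow> z \<notin> vars_trm t \<Longrightarrow> bounded (refuted_fm m y t z)"
  unfolding refuted_fm_def by (intro bounded_intros bounded_theta_fm)

lemma bounded_guess_fm:
  "local_vars [m, g, y, z] \<Longrightarrow> y \<notin> vars_trm t \<Longrightarrow> z \<notin> vars_trm t \<Longrightarrow> bounded (guess_fm m t g y z)"
  unfolding guess_fm_def
  by (intro bounded_intros bounded_refuted_fm) (auto simp: local_vars_def)

lemma bounded_changes_fm: "local_vars [m, s, g, y, z] \<Longrightarrow> bounded (changes_fm m s g y z)"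
  unfolding changes_fm_def
  by (intro bounded_intros bounded_guess_fm) (auto simp: local_vars_def)

lemma bounded_changes_below_fm:
  "local_vars [s, a, m, g, y, z] \<Longrightarrow> bounded (changes_below_fm s a m g y z)"
  unfolding changes_below_fm_def
  by (intro bounded_intros bounded_changes_fm) (auto simp: local_vars_def)

lemma bounded_first_change_fm:
  "local_vars [c, s, a, m, g, y, z] \<Longrightarrow> bounded (first_change_fm c s a m g y z)"
  unfolding first_change_fm_def
  by (intro bounded_intros bounded_changes_fm bounded_changes_below_fm) (auto simp: local_vars_def)

lemma bounded_colour_fm:
  "local_vars [c, i, j, a, s, m, g, y, z] \<Longrightarrow> bounded (colour_fm c i j a s m g y z)"
  unfolding colour_fm_def
  by (intro bounded_intros bounded_first_change_fm bounded_changes_below_fm) (auto simp: local_vars_def)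

lemmas bounded_code_intros = bounded_intros bounded_theta_fm bounded_refuted_fm bounded_guess_fm
  bounded_changes_fm bounded_changes_below_fm bounded_first_change_fm bounded_colour_fm

text \<open>In the inductions below, variable 0 is the induction variable and 20 or 30 is \<open>d\<close>;
  parameters occupy variables 1 to 6 and bound variables 10 to 14.\<close>

lemma refuted_mono: "refuted m y s \<Longrightarrow> mle s t \<Longrightarrow> refuted m y t"
  unfolding refuted_def using mless_trans by blast

lemma guess_le: "guess m s g \<Longrightarrow> mle g s"
  unfolding guess_def by blast

lemma guess_unique:
  assumes "guess m s g" and "guess m s g'"
  shows "g = g'"
proof -
  have False if "guess m s a" "guess m s b" "mless a b" for a b
  proof -
    have "refuted m a s"
      using that unfolding guess_def by blast
    moreover have "a \<noteq> s"
      using that guess_le[OF that(2)] mless_irrefl mless_mle_trans by blast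
    ultimately show False
      using that(1) unfolding guess_def by blast
  qed
  then show ?thesis
    using assms mless_linear by blast
qed

lemma guess_exists: "\<exists>g. guess m s g"
proof -
  have "(\<forall>y. mless y k \<longrightarrow> refuted m y s) \<or> (\<exists>g. mless g (msuc s) \<and> guess m s g)" for k
  proof (rule bounded_induct[where
        r="Disj (All_less 10 (Var 0) (refuted_fm 1 10 (Var 2) 11))
               (Ex_less 12 (Plus (Var 2) One) (guess_fm 1 (Var 2) 12 13 14))"
        and x=0 and d=30 and e="param_env(1 := m, 2 := s)"
        and P="\<lambda>k. (\<forall>y. mless y k \<longrightarrow> refuted m y s) \<or> (\<exists>g. mless g (msuc s) \<and> guess m s g)"])
    fix k
    assume IH: "(\<forall>y. mless y k \<longrightarrow> refuted m y s) \<or> (\<exists>g. mless g (msuc s) \<and> guess m s g)"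
    show "(\<forall>y. mless y (msuc k) \<longrightarrow> refuted m y s) \<or> (\<exists>g. mless g (msuc s) \<and> guess m s g)"
    proof (cases "(\<exists>g. mless g (msuc s) \<and> guess m s g) \<or> refuted m k s")
      case True
      with IH show ?thesis
        using mless_msuc_iff by blast
    next
      case False
      then have "\<forall>y. mless y k \<longrightarrow> refuted m y s" "\<not> refuted m k s"
        using IH by blast+
      then have "guess m s (if mle k s then k else s)"
        unfolding guess_def using mless_trans not_mless by auto
      then show ?thesis
        using mless_msuc_iff by (metis (full_types))
    qed
  qed (auto intro!: bounded_code_intros simp: local_vars_def not_mless_mzero)
  from this[of s] show ?thesis
    unfolding guess_def by blast
qed

lemma guess_msuc_mono:
  assumes "guess m s g" and "guess m (msuc s) g'"
  shows "mle g g'"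
proof (rule ccontr)
  assume "\<not> mle g g'"
  then have "mless g' g"
    using not_mless by blast
  then have "refuted m g' (msuc s)"
    using assms(1) refuted_mono mless_msuc unfolding guess_def by blast
  moreover have "g' \<noteq> msuc s"
    using \<open>mless g' g\<close> guess_le[OF assms(1)] mless_msuc mless_irrefl mless_trans by metis
  ultimately show False
    using assms(2) unfolding guess_def by blast
qed

lemma guess_mono:
  assumes "mle s t" and "guess m s g" and "guess m t g'"
  shows "mle g g'"
proof -
  have "mle s t \<longrightarrow> (\<forall>g'. mless g' (msuc t) \<longrightarrow> guess m t g' \<longrightarrow> mle g g')" for t
  proof (rule bounded_induct[where
        r="Imp (Le (Var 2) (Var 0))
              (All_less 10 (Plus (Var 0) One) (Imp (guess_fm 1 (Var 0) 10 11 12) (Le (Var 3) (Var 10))))"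
        and x=0 and d=30 and e="param_env(1 := m, 2 := s, 3 := g)"
        and P="\<lambda>t. mle s t \<longrightarrow> (\<forall>g'. mless g' (msuc t) \<longrightarrow> guess m t g' \<longrightarrow> mle g g')"])
    show "mle s mzero \<longrightarrow> (\<forall>g'. mless g' (msuc mzero) \<longrightarrow> guess m mzero g' \<longrightarrow> mle g g')"
      using assms(2) guess_unique not_mless_mzero by blast
  next
    fix t
    assume IH: "mle s t \<longrightarrow> (\<forall>g'. mless g' (msuc t) \<longrightarrow> guess m t g' \<longrightarrow> mle g g')"
    show "mle s (msuc t) \<longrightarrow> (\<forall>g'. mless g' (msuc (msuc t)) \<longrightarrow> guess m (msuc t) g' \<longrightarrow> mle g g')"
    proof (intro impI allI)
      fix g' assume "mle s (msuc t)" "guess m (msuc t) g'"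
      show "mle g g'"
      proof (cases "s = msuc t")
        case True
        then show ?thesis using \<open>guess m (msuc t) g'\<close> assms(2) guess_unique by blast
      next
        case False
        then have "mle s t"
          using \<open>mle s (msuc t)\<close> mless_msuc_iff by blast
        obtain g'' where "guess m t g''"
          using guess_exists by blast
        then have "mle g g''"
          using IH \<open>mle s t\<close> guess_le mless_msuc_iff by blast
        moreover have "mle g'' g'"
          using guess_msuc_mono \<open>guess m t g''\<close> \<open>guess m (msuc t) g'\<close> by blast
        ultimately show ?thesis
          using mle_trans by blast
      qed
    qed
  qed (auto intro!: bounded_code_intros simp: local_vars_def)
  then show ?thesis
    using assms guess_le mless_msuc_iff by blast
qed

lemma guess_unbounded:
  assumes "\<forall>s0. \<exists>s. mle s0 s \<and> changes m s"
  shows "\<exists>s g. mle s0 s \<and> guess m s g \<and> mle w g"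
proof -
  have "\<exists>s g. mless g (msuc s) \<and> mle s0 s \<and> guess m s g \<and> mle w g"
  proof (rule sigma1_induct[where
        r="Ex_less 10 (Plus (Var 20) One)
             (Conj (Le (Var 2) (Var 20)) (Conj (guess_fm 1 (Var 20) 10 11 12) (Le (Var 0) (Var 10))))"
        and x=0 and d=20 and e="param_env(1 := m, 2 := s0)"
        and P="\<lambda>w. \<exists>s g. mless g (msuc s) \<and> mle s0 s \<and> guess m s g \<and> mle w g"])
    show "\<exists>s g. mless g (msuc s) \<and> mle s0 s \<and> guess m s g \<and> mle mzero g"
      using guess_exists[of m s0] guess_le mzero_le mless_msuc_iff by blast
  next
    fix w
    assume "\<exists>s g. mless g (msuc s) \<and> mle s0 s \<and> guess m s g \<and> mle w g"
    then obtain s g where "mle s0 s" "guess m s g" "mle w g"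
      by blast
    obtain s' where "mle s s'" "changes m s'"
      using assms by blast
    then obtain g1 where g1: "guess m s' g1" "\<not> guess m (msuc s') g1"
      unfolding changes_def by blast
    obtain g2 where g2: "guess m (msuc s') g2"
      using guess_exists by blast
    have "mless g1 g2"
      using guess_msuc_mono[OF g1(1) g2] g1(2) g2 by blast
    moreover have "mle g g1"
      using guess_mono \<open>mle s s'\<close> \<open>guess m s g\<close> g1(1) by blast
    ultimately have "mle (msuc w) g2"
      using \<open>mle w g\<close> mle_mless_trans mless_imp_msuc_le by blast
    moreover have "mle s0 (msuc s')"
      using \<open>mle s0 s\<close> \<open>mle s s'\<close> mle_trans mless_msuc by blast
    ultimately show "\<exists>s g. mless g (msuc s) \<and> mle s0 s \<and> guess m s g \<and> mle (msuc w) g"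
      using g2 guess_le mless_msuc_iff by blast
  qed (auto intro!: bounded_code_intros simp: local_vars_def)
  then show ?thesis
    by blast
qed

lemma phi_imp_eventually_no_change:
  assumes "\<forall>z. theta m y z"
  shows "\<exists>s0. \<forall>s. mle s0 s \<longrightarrow> \<not> changes m s"
proof (rule ccontr)
  assume "\<not> ?thesis"
  then obtain s g where "guess m s g" "mle (msuc y) g"
    using guess_unbounded by blast
  then have "refuted m y s"
    unfolding guess_def using msuc_le_iff mless_mle_trans by blast
  with assms show False
    unfolding refuted_def by blast
qed

lemma eventually_no_change_imp_phi:
  assumes no_change: "\<forall>s. mle s0 s \<longrightarrow> \<not> changes m s"
  shows "phi m"
proof -
  obtain g0 where g0: "guess m s0 g0"
    using guess_exists by blast
  have stable: "mle s0 t \<longrightarrow> guess m t g0" for t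
  proof (rule bounded_induct[where r="Imp (Le (Var 2) (Var 0)) (guess_fm 1 (Var 0) 3 11 12)"
        and x=0 and d=30 and e="param_env(1 := m, 2 := s0, 3 := g0)"
        and P="\<lambda>t. mle s0 t \<longrightarrow> guess m t g0"])
    fix t
    assume IH: "mle s0 t \<longrightarrow> guess m t g0"
    show "mle s0 (msuc t) \<longrightarrow> guess m (msuc t) g0"
    proof
      assume "mle s0 (msuc t)"
      show "guess m (msuc t) g0"
      proof (cases "s0 = msuc t")
        case False
        then have "mle s0 t"
          using \<open>mle s0 (msuc t)\<close> mless_msuc_iff by blast
        then have "guess m t g0" "\<not> changes m t"
          using IH no_change by blast+
        then show ?thesis
          unfolding changes_def using guess_le mless_msuc_iff by blast
      qed (use g0 in simp)
    qed
  qed (use g0 in \<open>auto intro!: bounded_code_intros simp: local_vars_def not_mless_mzero\<close>)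
  have "theta m g0 z" for z
  proof -
    define t where "t = msuc (madd z (madd s0 g0))"
    have "mless z t" "mless g0 t" "mle s0 t"
      unfolding t_def using mle_madd mle_madd2 mle_trans mless_msuc mle_mless_trans by metis+
    then have "\<not> refuted m g0 t"
      using stable mless_irrefl unfolding guess_def by blast
    with \<open>mless z t\<close> show ?thesis
      unfolding refuted_def by blast
  qed
  then show ?thesis
    by blast
qed

lemma first_change_exists: "\<exists>a. first_change c s a"
proof -
  have "\<not> changes_below s k \<or> (\<exists>a. mless a k \<and> changes a s \<and> \<not> changes_below s a)" for k
  proof (rule bounded_induct[where
        r="Disj (Neg (changes_below_fm 2 0 10 11 12 13))
              (Ex_less 14 (Var 0) (Conj (changes_fm 14 2 11 12 13) (Neg (changes_below_fm 2 14 10 11 12 13))))"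
        and x=0 and d=30 and e="param_env(2 := s)"
        and P="\<lambda>k. \<not> changes_below s k \<or> (\<exists>a. mless a k \<and> changes a s \<and> \<not> changes_below s a)"])
    fix k
    assume "\<not> changes_below s k \<or> (\<exists>a. mless a k \<and> changes a s \<and> \<not> changes_below s a)"
    then show "\<not> changes_below s (msuc k) \<or> (\<exists>a. mless a (msuc k) \<and> changes a s \<and> \<not> changes_below s a)"
      unfolding changes_below_def using mless_msuc_iff by blast
  qed (auto intro!: bounded_code_intros simp: local_vars_def changes_below_def not_mless_mzero)
  from this[of c] show ?thesis
    unfolding first_change_def by blast
qed

lemma first_change_le: "first_change c s a \<Longrightarrow> mle a c"
  unfolding first_change_def by blast

lemma changes_below_iff:
  assumes "first_change c s a" and "mle b c"
  shows "changes_below s b \<longleftrightarrow> mless a b"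
proof
  assume "changes_below s b"
  then obtain m where "mless m b" "changes m s"
    unfolding changes_below_def by blast
  show "mless a b"
  proof (rule ccontr)
    assume "\<not> mless a b"
    then have "mless m a" "mless m c"
      using \<open>mless m b\<close> assms(2) not_mless mless_mle_trans by blast+
    with assms(1) \<open>changes m s\<close> show False
      unfolding first_change_def changes_below_def by blast
  qed
next
  assume "mless a b"
  then have "changes a s"
    using assms mless_mle_trans mless_irrefl unfolding first_change_def by blast
  with \<open>mless a b\<close> show "changes_below s b"
    unfolding changes_below_def by blast
qed

lemma changes_below_mono: "changes_below s a \<Longrightarrow> mle a b \<Longrightarrow> changes_below s b"
  unfolding changes_below_def using mless_mle_trans by blast

lemma colour_le: "colour c i j a \<Longrightarrow> mle a c"
  unfolding colour_def by blast

lemma colour_unique: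
  assumes "colour c i j a" and "colour c i j b"
  shows "a = b"
proof -
  have "\<not> mless a b" if ab: "colour c i j a" "colour c i j b" for a b
  proof -
    obtain s where "mless s j" "mle i s" "first_change c s a"
      using ab(1) unfolding colour_def by blast
    moreover have "mle b c"
      using ab(2) by (rule colour_le)
    ultimately show ?thesis
      using ab(2) changes_below_iff unfolding colour_def by blast
  qed
  then show ?thesis
    using assms mless_linear by blast
qed

lemma colour_msuc:
  assumes "first_change c j a"
  shows "colour c j (msuc j) a"
proof -
  have "mle a c"
    using assms by (rule first_change_le)
  moreover have "s = j" if "mless s (msuc j)" "mle j s" for s
    using that mless_msuc_iff mless_irrefl mless_trans by blast
  ultimately show ?thesis
    unfolding colour_def using assms changes_below_iff mless_irrefl mless_msuc by blast
qed

lemma colour_additive: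
  assumes "colour c i j a" and "colour c j k b"
  shows "colour c i k (mmin a b)"
proof -
  have "mless i j" "mless j k"
    using assms unfolding colour_def by blast+
  have "\<exists>s. mless s k \<and> mle i s \<and> first_change c s (mmin a b)"
  proof (cases "mless a b")
    case True
    with assms(1) \<open>mless j k\<close> show ?thesis
      unfolding colour_def mmin_def using mless_trans by auto
  next
    case False
    with assms(2) \<open>mless i j\<close> show ?thesis
      unfolding colour_def mmin_def using mless_mle_trans by auto
  qed
  moreover have "\<not> changes_below s (mmin a b)" if "mless s k" "mle i s" for s
  proof (cases "mless s j")
    case True
    with assms(1) that show ?thesis
      unfolding colour_def using changes_below_mono mmin_le1 by blast
  next
    case False
    with assms(2) that show ?thesis
      unfolding colour_def using changes_below_mono mmin_le2 not_mless by blast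
  qed
  moreover have "mle (mmin a b) c"
    using assms colour_le mmin_le1 mle_trans by blast
  ultimately show ?thesis
    unfolding colour_def using \<open>mless i j\<close> \<open>mless j k\<close> mless_trans by blast
qed

lemma colour_exists:
  assumes "mless i j"
  shows "\<exists>a. colour c i j a"
proof -
  have "mless i j \<longrightarrow> (\<exists>a. mless a (msuc c) \<and> colour c i j a)" for j
  proof (rule bounded_induct[where
        r="Imp (Less (Var 1) (Var 0)) (Ex_less 3 (Plus (Var 2) One) (colour_fm 2 1 0 3 10 14 11 12 13))"
        and x=0 and d=30 and e="param_env(1 := i, 2 := c)"
        and P="\<lambda>j. mless i j \<longrightarrow> (\<exists>a. mless a (msuc c) \<and> colour c i j a)"])
    fix j
    assume IH: "mless i j \<longrightarrow> (\<exists>a. mless a (msuc c) \<and> colour c i j a)"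
    obtain b where "first_change c j b"
      using first_change_exists by blast
    then have "colour c j (msuc j) b"
      by (rule colour_msuc)
    moreover have "\<exists>a. colour c i (msuc j) a" if "mless i j"
      using that IH \<open>colour c j (msuc j) b\<close> colour_additive by blast
    ultimately show "mless i (msuc j) \<longrightarrow> (\<exists>a. mless a (msuc c) \<and> colour c i (msuc j) a)"
      using colour_le mless_msuc_iff by blast
  qed (auto intro!: bounded_code_intros simp: local_vars_def not_mless_mzero)
  with assms show ?thesis
    by blast
qed

lemma colour_code: "\<exists>Cc\<in>l2sets M. codes_triples Cc (colour c)"
proof (rule bounded_triple_comprehension)
  show "bounded (colour_fm 6 2 3 4 10 14 11 12 13)"
    by (rule bounded_colour_fm) (simp add: local_vars_def)
  fix e' assume "\<forall>u>5. e' u = (param_env(6 := c)) u"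
  then have "agrees_on_params e'" "e' 6 = c"
    unfolding agrees_on_params_def param_env_def by auto
  then show "sat M e' E (colour_fm 6 2 3 4 10 14 11 12 13) \<longleftrightarrow> colour c (e' 2) (e' 3) (e' 4)"
    by (simp add: local_vars_def)
qed

lemma homogeneous_below_phi:
  assumes I: "model_infinite M I" "\<forall>i\<in>I. \<forall>j\<in>I. mless i j \<longrightarrow> colour c i j a"
    and "mless m a"
  shows "phi m"
proof -
  obtain i0 where "i0 \<in> I"
    using I(1) unfolding model_infinite_def by blast
  have "\<not> changes m s" if "mle i0 s" for s
  proof -
    obtain j where "j \<in> I" "mless s j"
      using I(1) unfolding model_infinite_def by blast
    then have "colour c i0 j a"
      using I(2) \<open>i0 \<in> I\<close> that mle_mless_trans by blast
    then have "\<not> changes_below s a"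
      using \<open>mless s j\<close> that unfolding colour_def by blast
    with \<open>mless m a\<close> show ?thesis
      unfolding changes_below_def by blast
  qed
  then show ?thesis
    using eventually_no_change_imp_phi by blast
qed

lemma homogeneous_not_phi:
  assumes I: "model_infinite M I" "\<forall>i\<in>I. \<forall>j\<in>I. mless i j \<longrightarrow> colour c i j a"
    and "mless a c"
  shows "\<not> phi a"
proof
  assume "phi a"
  then obtain s0 where no_change: "\<forall>s. mle s0 s \<longrightarrow> \<not> changes a s"
    using phi_imp_eventually_no_change by blast
  obtain j1 j2 where "j1 \<in> I" "mless s0 j1" "j2 \<in> I" "mless j1 j2"
    using I(1) unfolding model_infinite_def by blast
  then obtain s where "mle j1 s" "first_change c s a"
    using I(2) unfolding colour_def by blast
  then have "changes a s"
    using \<open>mless a c\<close> mless_irrefl unfolding first_change_def by blast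
  moreover have "mle s0 s"
    using \<open>mless s0 j1\<close> \<open>mle j1 s\<close> mless_mle_trans by blast
  ultimately show False
    using no_change by blast
qed

lemma sigma2_induction:
  assumes "ART M" and "phi mzero" and "\<And>m. phi m \<Longrightarrow> phi (msuc m)"
  shows "phi c"
proof (rule ccontr)
  assume "\<not> phi c"
  obtain Cc where "Cc \<in> l2sets M" "codes_triples Cc (colour c)"
    using colour_code by blast
  have "\<exists>I a. model_infinite M I \<and> mle a c \<and> (\<forall>i\<in>I. \<forall>j\<in>I. mless i j \<longrightarrow> colour c i j a)"
  proof (rule ART_min_colouring[OF assms(1) \<open>Cc \<in> l2sets M\<close> \<open>codes_triples Cc (colour c)\<close>])
    show "colour c i j b \<Longrightarrow> mless i j \<and> mle b c" for i j b
      unfolding colour_def by blast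
  qed (fact colour_exists colour_unique colour_additive)+
  then obtain I a where I: "model_infinite M I" "\<forall>i\<in>I. \<forall>j\<in>I. mless i j \<longrightarrow> colour c i j a"
    and "mle a c"
    by blast
  have "\<not> phi a"
    using homogeneous_not_phi[OF I] \<open>mle a c\<close> \<open>\<not> phi c\<close> by blast
  moreover have "phi a"
  proof (cases "a = mzero")
    case False
    then obtain p where "a = msuc p"
      using mzero_or_msuc by blast
    then show ?thesis
      using homogeneous_below_phi[OF I] mless_msuc assms(3) by blast
  qed (use assms(2) in simp)
  ultimately show False
    by blast
qed

end

theorem mainTheorem5:
  fixes M :: "'m l2struct"
  assumes "RCA0 M" and "ART M"
  shows "IND Sigma02 M"
  unfolding IND_def
proof (intro allI impI)
  fix p x e E n
  assume "Sigma02 p" "good_env M E" and base: "sat M (e(x := zr M)) E p"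
    and step: "\<forall>m. sat M (e(x := m)) E p \<longrightarrow> sat M (e(x := ad M m (on M))) E p"
  obtain y z q where p: "p = Ex y (All z q)" and "bounded q"
    using \<open>Sigma02 p\<close> unfolding Sigma02_def by blast
  interpret sigma2_instance M E e x y z q
    using assms(1) \<open>good_env M E\<close> \<open>bounded q\<close> by unfold_locales
  have "sat M (e(x := m)) E p \<longleftrightarrow> phi m" for m
    unfolding p theta_def by simp
  with sigma2_induction[OF assms(2)] base step show "sat M (e(x := n)) E p"
    by blast
qed

end
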